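(* For every integer $n\ge 1$, let $C_n$ be the family of all distinct full star-simplices $\Sigma^{\star}_{\max}(\lambda,c)$ and full top-simplices $\Sigma^{\top}_{\max}(\lambda,a)$ of $K_n=\operatorname{Cl}(G_n)$ (over all $\lambda\vdash n$, removable corners $c$, addable corners $a$), and let $N_n$ be the nerve of $C_n$. Then \[ \chi(K_n)=\chi(N_n), \] equivalently $b_n=\chi(N_n)-1$ where $b_n:=\chi(K_n)-1$.
   Context: $G_n$ is the partition graph on the set of integer partitions of $n$: two partitions are adjacent if one is obtained from the other by decreasing one part by $1$ and increasing another part (possibly a part equal to $0$) by $1$, followed by reordering, with the result different from the original. $K_n=\operatorname{Cl}(G_n)$ is its clique complex. For $\lambda=(\lambda_1\ge\lambda_2\ge\cdots)\vdash n$ (with $\lambda_k=0$ for $k$ beyond the length $\ell$), a removable corner is a row $i$ with $\lambda_i>\lambda_{i+1}$, and an addable corner is a row $j\le \ell+1$ with $j=1$ or $\lambda_{j-1}>\lambda_j$. For a removable corner $c=i$ and an addable corner $a=j$ with $i\ne j$, $\lambda(c\to a)$ is the partition obtained by decreasing $\lambda_i$ by $1$, increasing $\lambda_j$ by $1$, and reordering; the transfer is admissible if $\lambda(c\to a)\neq\lambda$ (so $\lambda(c\to a)$ is a neighbour of $\lambda$ in $G_n$). Set $A_{\max}(\lambda,c)=\{a:\lambda(c\to a)\text{ admissible}\}$, $C_{\max}(\lambda,a)=\{c:\lambda(c\to a)\text{ admissible}\}$, $\Sigma^{\star}_{\max}(\lambda,c)=\{\lambda\}\cup\{\lambda(c\to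 a):a\in A_{\max}(\lambda,c)\}$ and $\Sigma^{\top}_{\max}(\lambda,a)=\{\lambda\}\cup\{\lambda(c\to a):c\in C_{\max}(\lambda,a)\}$; these vertex sets are cliques of $G_n$, hence simplices of $K_n$, and each is regarded as the subcomplex of $K_n$ consisting of all its faces. The nerve $N_n=N(C_n)$ is the simplicial complex with vertex set $C_n$ whose simplices are the nonempty subfamilies of $C_n$ with nonempty common intersection. $\chi$ denotes Euler characteristic. *)

theory Defs
  imports Main
begin

definition partitions :: "nat \<Rightarrow> nat list set" where
  "partitions n = {xs. sorted_wrt (\<ge>) xs \<and> 0 \<notin> set xs \<and> sum_list xs = n}"

definition part :: "nat list \<Rightarrow> nat \<Rightarrow> nat" where
  "part xs i = (if 1 \<le> i \<and> i \<le> length xs then xs ! (i - 1) else 0)"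

text \<open>Decrease part i by one, increase part j by one, reorder (drop zeros).
  Intended for 1 \<le> i \<le> length, part i \<ge> 1, 1 \<le> j \<le> length + 1.\<close>
definition move :: "nat list \<Rightarrow> nat \<Rightarrow> nat \<Rightarrow> nat list" where
  "move xs i j =
     (let f = (\<lambda>k. if k = i then part xs k - 1 else if k = j then part xs k + 1 else part xs k)
      in rev (sort (filter (\<lambda>x. x \<noteq> 0) (map f [1..<length xs + 2]))))"

definition adj :: "nat list \<Rightarrow> nat list \<Rightarrow> bool" where
  "adj xs ys \<longleftrightarrow> (\<exists>i j. i \<noteq> j \<and> 1 \<le> i \<and> i \<le> length xs \<and> 1 \<le> j \<and> j \<le> length xs + 1
        \<and> ys = move xs i j \<and> ys \<noteq> xs)"

definition removable :: "nat list \<Rightarrow> nat \<Rightarrow> bool" where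
  "removable xs i \<longleftrightarrow> 1 \<le> i \<and> i \<le> length xs \<and> part xs i > part xs (i + 1)"

definition addable :: "nat list \<Rightarrow> nat \<Rightarrow> bool" where
  "addable xs j \<longleftrightarrow> 1 \<le> j \<and> j \<le> length xs + 1 \<and> (j = 1 \<or> part xs (j - 1) > part xs j)"

definition admissible :: "nat list \<Rightarrow> nat \<Rightarrow> nat \<Rightarrow> bool" where
  "admissible xs c a \<longleftrightarrow> removable xs c \<and> addable xs a \<and> c \<noteq> a \<and> move xs c a \<noteq> xs"

definition A_max :: "nat list \<Rightarrow> nat \<Rightarrow> nat set" where
  "A_max xs c = {a. admissible xs c a}"

definition C_max :: "nat list \<Rightarrow> nat \<Rightarrow> nat set" where
  "C_max xs a = {c. admissible xs c a}"

definition star_max :: "nat list \<Rightarrow> nat \<Rightarrow> nat list set" where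
  "star_max xs c = insert xs ((\<lambda>a. move xs c a) ` A_max xs c)"

definition top_max :: "nat list \<Rightarrow> nat \<Rightarrow> nat list set" where
  "top_max xs a = insert xs ((\<lambda>c. move xs c a) ` C_max xs a)"

definition K :: "nat \<Rightarrow> nat list set set" where
  "K n = {s. s \<noteq> {} \<and> finite s \<and> s \<subseteq> partitions n \<and> (\<forall>x\<in>s. \<forall>y\<in>s. x \<noteq> y \<longrightarrow> adj x y)}"

text \<open>The family C_n of full star- and top-simplices (as vertex sets; distinct = distinct sets).\<close>
definition C :: "nat \<Rightarrow> nat list set set" where
  "C n = {star_max xs c | xs c. xs \<in> partitions n \<and> removable xs c}
       \<union> {top_max xs a | xs a. xs \<in> partitions n \<and> addable xs a}"

definition nerve :: "'a set set \<Rightarrow> 'a set set set" where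
  "nerve F = {G. G \<noteq> {} \<and> finite G \<and> G \<subseteq> F \<and> \<Inter>G \<noteq> {}}"

definition euler_char :: "'a set set \<Rightarrow> int" where
  "euler_char S = (\<Sum>s\<in>S. (-1) ^ (card s - 1))"

end

theory Submission
  imports Defs "HOL-Library.Multiset"
begin

text \<open>Write every neighbour of a vertex l of a clique of the partition graph as a single
  box transfer l(c \<rightarrow> a). Two such neighbours are adjacent only if their transfers share
  the corner c or the corner a, and a family of transfers that pairwise share a corner all
  share the same c or all share the same a. Hence every clique lies in a full star- or
  top-simplex, i.e. K_n is the complex generated by C_n. For any finite family of finite
  sets, inclusion-exclusion for the (additive) Euler characteristic turns the generated
  complex into an alternating sum over subfamilies, in which a subfamily with nonempty
  intersection contributes the full simplex on that intersection, of Euler characteristic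
  one; this is the Euler characteristic of the nerve.\<close>

section \<open>Euler characteristic of a generated complex\<close>

definition generated_complex :: "'a set set \<Rightarrow> 'a set set" where
  "generated_complex F = (\<Union>f\<in>F. Pow f - {{}})"

lemma sum_Pow_minus_one_pow_card:
  assumes "finite T" "T \<noteq> {}"
  shows "(\<Sum>s\<in>Pow T. (-1::'b::ring_1) ^ card s) = 0"
proof (rule sum_alternating_cancels)
  show "finite (Pow T)" using assms(1) by simp
  show "card {s \<in> Pow T. even (card s)} = card {s \<in> Pow T. odd (card s)}"
    using card_subsupersets_even_odd[of T "{}"] assms by auto
qed

lemma euler_char_Pow_nonempty:
  assumes "finite T"
  shows "euler_char (Pow T - {{}}) = (if T = {} then 0 else 1)"
proof -
  have "euler_char (Pow T - {{}}) = - (\<Sum>s\<in>Pow T - {{}}. (-1::int) ^ card s)"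
    unfolding euler_char_def sum_negf[symmetric]
  proof (rule sum.cong)
    fix s assume "s \<in> Pow T - {{}}"
    then have "finite s" "s \<noteq> {}" using assms by (auto intro: rev_finite_subset)
    then have "card s \<noteq> 0" by simp
    then show "(-1::int) ^ (card s - 1) = - ((-1) ^ card s)"
      by (cases "card s") auto
  qed simp
  also have "\<dots> = 1 - (\<Sum>s\<in>Pow T. (-1::int) ^ card s)"
    using assms by (simp add: sum_diff1)
  finally show ?thesis
    using sum_Pow_minus_one_pow_card[OF assms] by auto
qed

interpretation euler_char: Incl_Excl finite euler_char
  by unfold_locales (auto simp: euler_char_def disjnt_def sum.union_disjoint)

theorem euler_char_generated_complex_eq_nerve:
  assumes "finite F" and "\<And>f. f \<in> F \<Longrightarrow> finite f"
  shows "euler_char (generated_complex F) = euler_char (nerve F)"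
proof -
  have "euler_char (generated_complex F)
      = (\<Sum>G | G \<subseteq> F \<and> G \<noteq> {}. (-1) ^ (card G + 1) * euler_char (\<Inter>f\<in>G. Pow f - {{}}))"
    unfolding generated_complex_def using assms by (intro euler_char.restricted_indexed) auto
  also have "\<dots> = (\<Sum>G | G \<subseteq> F \<and> G \<noteq> {}. if \<Inter>G \<noteq> {} then (-1) ^ (card G - 1) else 0)"
  proof (rule sum.cong)
    fix G assume G: "G \<in> {G. G \<subseteq> F \<and> G \<noteq> {}}"
    then have "(\<Inter>f\<in>G. Pow f - {{}}) = Pow (\<Inter>G) - {{}}" by auto
    moreover have "finite (\<Inter>G)"
    proof -
      obtain g where "g \<in> G" using G by blast
      then have "\<Inter>G \<subseteq> g" "finite g" using G assms(2) by auto
      then show ?thesis by (rule rev_finite_subset[rotated])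
    qed
    moreover have "card G \<noteq> 0" using G assms(1) by (simp add: rev_finite_subset)
    ultimately show "(-1) ^ (card G + 1) * euler_char (\<Inter>f\<in>G. Pow f - {{}})
        = (if \<Inter>G \<noteq> {} then (-1) ^ (card G - 1) else 0)"
      by (simp add: euler_char_Pow_nonempty) (cases "card G"; simp)
  qed simp
  also have "\<dots> = (\<Sum>G \<in> {G \<in> {G. G \<subseteq> F \<and> G \<noteq> {}}. \<Inter>G \<noteq> {}}. (-1) ^ (card G - 1))"
    using assms(1) by (intro sum.inter_filter[symmetric]) simp
  also have "{G \<in> {G. G \<subseteq> F \<and> G \<noteq> {}}. \<Inter>G \<noteq> {}} = nerve F"
    unfolding nerve_def using assms(1) by (auto intro: rev_finite_subset)
  finally show ?thesis unfolding euler_char_def .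
qed

section \<open>Partitions as part vectors\<close>

definition is_partition :: "nat list \<Rightarrow> bool" where
  "is_partition xs \<longleftrightarrow> sorted_wrt (\<ge>) xs \<and> 0 \<notin> set xs"

lemma partitions_iff: "xs \<in> partitions n \<longleftrightarrow> is_partition xs \<and> sum_list xs = n"
  unfolding partitions_def is_partition_def by auto

text \<open>HOL-Library.Multiset also has a constant part (used by its sorting algorithms), so
  the definition of Defs.part must be referred to as Defs.part_def.\<close>
lemma part_0 [simp]: "part xs 0 = 0"
  by (simp add: Defs.part_def)

lemma part_Suc: "part xs (Suc i) = (if i < length xs then xs ! i else 0)"
  by (simp add: Defs.part_def)

lemma part_pos_iff:
  assumes "is_partition xs"
  shows "0 < part xs k \<longleftrightarrow> 1 \<le> k \<and> k \<le> length xs"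
proof (cases "1 \<le> k \<and> k \<le> length xs")
  case True
  then have "xs ! (k - 1) \<in> set xs" by (intro nth_mem) linarith
  then show ?thesis using assms True by (auto simp: Defs.part_def is_partition_def intro: gr0I)
qed (auto simp: Defs.part_def)

lemma part_antimono:
  assumes "is_partition xs" "1 \<le> i" "i \<le> j"
  shows "part xs j \<le> part xs i"
proof (cases "i < j \<and> j \<le> length xs")
  case True
  then have "xs ! (j - 1) \<le> xs ! (i - 1)"
    using assms sorted_wrt_nth_less[of "(\<ge>)" xs "i - 1" "j - 1"] by (auto simp: is_partition_def)
  then show ?thesis using assms True by (simp add: Defs.part_def)
qed (use assms in \<open>auto simp: Defs.part_def\<close>)

lemma partition_eqI:
  assumes "is_partition xs" "is_partition ys" "\<And>k. part xs k = part ys k"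
  shows "xs = ys"
proof -
  have "1 \<le> k \<and> k \<le> length xs \<longleftrightarrow> 1 \<le> k \<and> k \<le> length ys" for k
    using part_pos_iff[OF assms(1), of k] part_pos_iff[OF assms(2), of k] assms(3) by simp
  from this[of "length xs"] this[of "length ys"] have "length xs = length ys"
    by linarith
  then show ?thesis using assms(3) by (metis nth_equalityI part_Suc)
qed

lemma map_part_rows: "map (part xs) [1..<length xs + 2] = xs @ [0]"
proof -
  have "[1..<length xs + 2] = map Suc ([0..<length xs] @ [length xs])"
    by (simp add: map_Suc_upt)
  then have "map (part xs) [1..<length xs + 2] = map (\<lambda>i. xs ! i) [0..<length xs] @ [0]"
    by (simp add: part_Suc)
  then show ?thesis by (simp add: map_nth)
qed

lemma rev_sort_eq_self:
  assumes "sorted_wrt (\<ge>) xs"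
  shows "rev (sort xs) = xs"
proof -
  have "sort xs = rev xs"
    using assms by (intro properties_for_sort) (simp_all add: sorted_wrt_rev)
  then show ?thesis by simp
qed

lemma antitone_from_one:
  fixes g :: "nat \<Rightarrow> nat"
  assumes "\<And>k. 1 \<le> k \<Longrightarrow> g (Suc k) \<le> g k" "1 \<le> i" "i \<le> j"
  shows "g j \<le> g i"
  using assms(3)
proof (induction j rule: dec_induct)
  case (step m)
  then show ?case using assms(1)[of m] assms(2) by simp
qed simp

lemma rev_sort_nonzero_antitone:
  fixes g :: "nat \<Rightarrow> nat"
  assumes antitone: "\<And>k. 1 \<le> k \<Longrightarrow> g (Suc k) \<le> g k"
    and vanishing: "\<And>k. L + 2 \<le> k \<Longrightarrow> g k = 0"
  defines "ys \<equiv> rev (sort (filter (\<lambda>v. v \<noteq> 0) (map g [1..<L + 2])))"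
  shows "is_partition ys" and "\<And>k. 1 \<le> k \<Longrightarrow> part ys k = g k"
proof -
  define m where "m = (LEAST k. 1 \<le> k \<and> g k = 0)"
  have ex: "1 \<le> L + 2 \<and> g (L + 2) = 0" using vanishing by simp
  have m1: "1 \<le> m" and gm: "g m = 0" and mL: "m \<le> L + 2"
    using LeastI[of "\<lambda>k. 1 \<le> k \<and> g k = 0", OF ex] Least_le[of "\<lambda>k. 1 \<le> k \<and> g k = 0", OF ex]
    unfolding m_def by auto
  have below: "g k \<noteq> 0" if "1 \<le> k" "k < m" for k
    using not_less_Least[of k "\<lambda>k. 1 \<le> k \<and> g k = 0"] that unfolding m_def by auto
  have above: "g k = 0" if "m \<le> k" for k
    using antitone_from_one[of g m k, OF antitone] m1 that gm by simp
  have "[1..<L + 2] = [1..<m] @ [m..<L + 2]"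
    using m1 mL by (metis le_add_diff_inverse upt_add_eq_append)
  then have "filter (\<lambda>v. v \<noteq> 0) (map g [1..<L + 2]) = map g [1..<m]"
    using below above by (auto intro!: filter_True filter_False)
  moreover have sorted: "sorted_wrt (\<ge>) (map g [1..<m])"
    unfolding sorted_wrt_map sorted_wrt_iff_nth_less using antitone_from_one[of g, OF antitone] by auto
  ultimately have ys: "ys = map g [1..<m]"
    unfolding ys_def by (simp add: rev_sort_eq_self)
  show "is_partition ys"
    unfolding ys is_partition_def using sorted below by fastforce
  show "part ys k = g k" if "1 \<le> k" for k
    unfolding ys using that above m1 by (auto simp: Defs.part_def nth_append)
qed

text \<open>The rows 1, ..., length xs + 1 of xs after the transfer, before sorting; since move
  only sorts them and drops zeros, this multiset determines the move.\<close>
definition moved_rows :: "nat list \<Rightarrow> nat \<Rightarrow> nat \<Rightarrow> nat multiset" where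
  "moved_rows xs i j = mset (map (\<lambda>k. if k = i then part xs k - 1 else if k = j then part xs k + 1
                                      else part xs k) [1..<length xs + 2])"

lemma move_eq_moved_rows:
  "move xs i j = rev (sorted_list_of_multiset (filter_mset (\<lambda>v. v \<noteq> 0) (moved_rows xs i j)))"
  by (simp only: move_def moved_rows_def Let_def mset_filter[symmetric] sorted_list_of_multiset_mset)

lemma image_mset_mset_set_update2:
  assumes "finite S" "i \<in> S" "j \<in> S" "i \<noteq> j" "\<And>k. k \<in> S \<Longrightarrow> k \<noteq> i \<Longrightarrow> k \<noteq> j \<Longrightarrow> f k = g k"
  shows "image_mset f (mset_set S) + {#g i, g j#} = image_mset g (mset_set S) + {#f i, f j#}"
proof -
  have "mset_set S = add_mset i (mset_set (S - {i}))"
    using assms(1,2) by (rule mset_set.remove)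
  also have "mset_set (S - {i}) = add_mset j (mset_set (S - {i} - {j}))"
    using assms(1,3,4) by (intro mset_set.remove) auto
  also have "S - {i} - {j} = S - {i, j}" by auto
  finally have S: "mset_set S = add_mset i (add_mset j (mset_set (S - {i, j})))" .
  have "image_mset f (mset_set (S - {i, j})) = image_mset g (mset_set (S - {i, j}))"
    using assms(1,5) by (intro image_mset_cong) auto
  then show ?thesis unfolding S by (simp add: add_mset_commute)
qed

lemma moved_rows_add_parts:
  assumes "i \<noteq> j" "i \<in> {1..<length xs + 2}" "j \<in> {1..<length xs + 2}"
  shows "moved_rows xs i j + {#part xs i, part xs j#} = mset (xs @ [0]) + {#part xs i - 1, part xs j + 1#}"
proof -
  define f where "f = (\<lambda>k. if k = i then part xs k - 1 else if k = j then part xs k + 1 else part xs k)"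
  have "moved_rows xs i j = image_mset f (mset_set {1..<length xs + 2})"
    unfolding moved_rows_def f_def mset_map mset_upt ..
  moreover have "f i = part xs i - 1" "f j = part xs j + 1"
    using assms(1) by (simp_all add: f_def)
  moreover have "image_mset f (mset_set {1..<length xs + 2}) + {#part xs i, part xs j#}
      = image_mset (part xs) (mset_set {1..<length xs + 2}) + {#f i, f j#}"
    using assms by (intro image_mset_mset_set_update2) (auto simp: f_def)
  ultimately have "moved_rows xs i j + {#part xs i, part xs j#}
      = image_mset (part xs) (mset_set {1..<length xs + 2}) + {#part xs i - 1, part xs j + 1#}"
    by simp
  also have "image_mset (part xs) (mset_set {1..<length xs + 2}) = mset (xs @ [0])"
    by (simp flip: mset_upt mset_map map_part_rows)
  finally show ?thesis .
qed

lemma move_cong_parts: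
  assumes "i \<noteq> j" "i' \<noteq> j'" "i \<in> {1..<length xs + 2}" "j \<in> {1..<length xs + 2}"
    "i' \<in> {1..<length xs + 2}" "j' \<in> {1..<length xs + 2}"
    "part xs i = part xs i'" "part xs j = part xs j'"
  shows "move xs i j = move xs i' j'"
proof -
  have "moved_rows xs i j + {#part xs i, part xs j#} = moved_rows xs i' j' + {#part xs i, part xs j#}"
    using moved_rows_add_parts[of i j xs] moved_rows_add_parts[of i' j' xs] assms by simp
  then show ?thesis by (simp add: move_eq_moved_rows)
qed

lemma move_eq_self:
  assumes "is_partition xs" "i \<noteq> j" "i \<in> {1..<length xs + 2}" "j \<in> {1..<length xs + 2}"
    "part xs i = part xs j + 1"
  shows "move xs i j = xs"
proof -
  have "{#part xs i - 1, part xs j + 1#} = {#part xs i, part xs j#}"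
    using assms(5) by (simp only: add_diff_cancel_right' add_mset_commute)
  then have "moved_rows xs i j = mset (xs @ [0])"
    using moved_rows_add_parts[OF assms(2-4)] by (metis add_right_imp_eq)
  then have "filter_mset (\<lambda>v. v \<noteq> 0) (moved_rows xs i j) = mset (filter (\<lambda>v. v \<noteq> 0) (xs @ [0]))"
    by (simp only: mset_filter)
  also have "filter (\<lambda>v. v \<noteq> 0) xs = xs"
    by (rule filter_True) (metis assms(1) is_partition_def)
  then have "filter (\<lambda>v. v \<noteq> 0) (xs @ [0]) = xs" by simp
  finally have "filter_mset (\<lambda>v. v \<noteq> 0) (moved_rows xs i j) = mset xs" .
  then have "move xs i j = rev (sort xs)"
    by (simp only: move_eq_moved_rows sorted_list_of_multiset_mset)
  also have "\<dots> = xs"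
    using assms(1) unfolding is_partition_def by (blast intro: rev_sort_eq_self)
  finally show ?thesis .
qed

lemma sum_mset_filter_nonzero: "sum_mset (filter_mset (\<lambda>v. v \<noteq> 0) M) = sum_mset (M :: nat multiset)"
  by (induction M) auto

lemma sum_list_move:
  assumes "i \<noteq> j" "i \<in> {1..<length xs + 2}" "j \<in> {1..<length xs + 2}" "0 < part xs i"
  shows "sum_list (move xs i j) = sum_list xs"
proof -
  have "sum_list (move xs i j) = sum_mset (filter_mset (\<lambda>v. v \<noteq> 0) (moved_rows xs i j))"
    unfolding move_eq_moved_rows sum_mset_sum_list[symmetric] mset_rev mset_sorted_list_of_multiset ..
  then have "sum_list (move xs i j) = sum_mset (moved_rows xs i j)"
    by (simp only: sum_mset_filter_nonzero)
  then show ?thesis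
    using arg_cong[OF moved_rows_add_parts[OF assms(1-3)], of sum_mset] assms(4)
    by (simp add: sum_mset_sum_list)
qed

section \<open>Adjacency as a transfer of one box\<close>

text \<open>ys arises from xs by moving one box from row c to row a; the box is added on both
  sides so that no truncated subtraction occurs.\<close>
definition box_transfer :: "nat list \<Rightarrow> nat \<Rightarrow> nat \<Rightarrow> nat list \<Rightarrow> bool" where
  "box_transfer xs c a ys \<longleftrightarrow>
     c \<noteq> a \<and> (\<forall>k. part ys k + (if k = c then 1 else 0) = part xs k + (if k = a then 1 else 0))"

text \<open>Moving the last box of a removable row c to an addable row a keeps the parts weakly
  decreasing, so sorting does nothing. The single exception is a = c + 1 with parts differing
  by one: then the transfer merely exchanges the two parts and sorting gives back xs.\<close>
lemma move_between_corners:
  assumes xs: "is_partition xs" and c: "removable xs c" and a: "addable xs a" and "c \<noteq> a"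
    and not_swap: "\<not> (a = c + 1 \<and> part xs c = part xs a + 1)"
  shows "is_partition (move xs c a)" and "box_transfer xs c a (move xs c a)"
proof -
  define g where "g = (\<lambda>k. if k = c then part xs k - 1 else if k = a then part xs k + 1 else part xs k)"
  have mv: "move xs c a = rev (sort (filter (\<lambda>v. v \<noteq> 0) (map g [1..<length xs + 2])))"
    unfolding move_def g_def Let_def ..
  have c1: "1 \<le> c" and cL: "c \<le> length xs" and c_drop: "part xs (c + 1) < part xs c"
    using c unfolding removable_def by auto
  have a1: "1 \<le> a" and aL: "a \<le> length xs + 1" and a_drop: "a = 1 \<or> part xs a < part xs (a - 1)"
    using a unfolding addable_def by auto
  have antitone: "g (Suc k) \<le> g k" if k1: "1 \<le> k" for k
  proof -
    have "part xs (Suc k) \<le> part xs k" using part_antimono[OF xs k1] by simp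
    moreover have "Suc k = a \<Longrightarrow> part xs a < part xs k" using a_drop k1 by auto
    moreover have "k = c \<Longrightarrow> part xs (Suc k) < part xs c" using c_drop by simp
    ultimately show ?thesis using not_swap \<open>c \<noteq> a\<close> unfolding g_def by auto
  qed
  have vanishing: "g k = 0" if "length xs + 2 \<le> k" for k
    using that cL aL part_pos_iff[OF xs, of k] unfolding g_def by auto
  show "is_partition (move xs c a)"
    unfolding mv by (rule rev_sort_nonzero_antitone(1)[of g "length xs", OF antitone vanishing])
  have "part (move xs c a) k = g k" if "1 \<le> k" for k
    unfolding mv using rev_sort_nonzero_antitone(2)[of g "length xs", OF antitone vanishing that] .
  moreover have "0 < part xs c" using part_pos_iff[OF xs] c1 cL by simp
  ultimately have "part (move xs c a) k + (if k = c then 1 else 0) = part xs k + (if k = a then 1 else 0)"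
    for k
    using \<open>c \<noteq> a\<close> a1 c1 by (cases "k = 0") (auto simp: g_def)
  then show "box_transfer xs c a (move xs c a)"
    using \<open>c \<noteq> a\<close> unfolding box_transfer_def by blast
qed

lemma admissible_move:
  assumes xs: "is_partition xs" and adm: "admissible xs c a"
  shows "is_partition (move xs c a)" and "box_transfer xs c a (move xs c a)"
proof -
  have c: "removable xs c" and a: "addable xs a" and "c \<noteq> a" and "move xs c a \<noteq> xs"
    using adm unfolding admissible_def by auto
  moreover have "\<not> (a = c + 1 \<and> part xs c = part xs a + 1)"
    using move_eq_self[OF xs \<open>c \<noteq> a\<close>] c a \<open>move xs c a \<noteq> xs\<close>
    unfolding removable_def addable_def by auto
  ultimately show "is_partition (move xs c a)" "box_transfer xs c a (move xs c a)"
    using move_between_corners[OF xs] by auto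
qed

lemma move_in_partitions:
  assumes "xs \<in> partitions n" "admissible xs c a"
  shows "move xs c a \<in> partitions n"
proof -
  have "is_partition xs" "sum_list xs = n" using assms(1) partitions_iff by auto
  moreover have "sum_list (move xs c a) = sum_list xs"
    using assms(2) part_pos_iff[OF \<open>is_partition xs\<close>, of c]
    unfolding admissible_def removable_def addable_def by (intro sum_list_move) auto
  ultimately show ?thesis
    using admissible_move(1)[OF _ assms(2)] partitions_iff by auto
qed

lemma box_transfer_corners:
  assumes xs: "is_partition xs" and ys: "is_partition ys" and tr: "box_transfer xs c a ys"
  shows "removable xs c" and "addable xs a" and "\<not> (a = c + 1 \<and> part xs c = part xs a + 1)"
proof -
  have "c \<noteq> a" and eq: "\<And>k. part ys k + (if k = c then 1 else 0) = part xs k + (if k = a then 1 else 0)"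
    using tr unfolding box_transfer_def by auto
  have a1: "1 \<le> a" and c1: "1 \<le> c"
    using eq[of 0] \<open>c \<noteq> a\<close> by (auto split: if_splits)
  have at_c: "part xs c = part ys c + 1" and at_a: "part ys a = part xs a + 1"
    using eq[of c] eq[of a] \<open>c \<noteq> a\<close> by auto
  have "part xs (c + 1) \<le> part ys (c + 1)" using eq[of "c + 1"] by (auto split: if_splits)
  also have "\<dots> \<le> part ys c" using part_antimono[OF ys c1] by simp
  finally show "removable xs c"
    using at_c part_pos_iff[OF xs, of c] c1 unfolding removable_def by simp
  have a_drop: "part xs a < part xs (a - 1)" if "2 \<le> a"
  proof -
    have "part ys a \<le> part ys (a - 1)" using part_antimono[OF ys, of "a - 1" a] that by simp
    moreover have "part ys (a - 1) \<le> part xs (a - 1)" using eq[of "a - 1"] that by (auto split: if_splits)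
    ultimately show ?thesis using at_a by simp
  qed
  have "a \<le> length xs + 1"
    using a_drop part_pos_iff[OF xs, of "a - 1"] by (cases "2 \<le> a") auto
  then show "addable xs a"
    using a1 a_drop unfolding addable_def by (cases "a = 1") auto
  show "\<not> (a = c + 1 \<and> part xs c = part xs a + 1)"
    using part_antimono[OF ys c1, of a] at_a at_c by auto
qed

lemma box_transfer_imp_admissible:
  assumes xs: "is_partition xs" and ys: "is_partition ys" and tr: "box_transfer xs c a ys"
  shows "admissible xs c a" and "ys = move xs c a"
proof -
  have "c \<noteq> a" and eq: "\<And>k. part ys k + (if k = c then 1 else 0) = part xs k + (if k = a then 1 else 0)"
    using tr unfolding box_transfer_def by auto
  note corners = box_transfer_corners[OF xs ys tr]
  have zs: "is_partition (move xs c a)" "box_transfer xs c a (move xs c a)"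
    using move_between_corners[OF xs corners(1,2) \<open>c \<noteq> a\<close> corners(3)] by auto
  have "part (move xs c a) k = part ys k" for k
  proof -
    have "part (move xs c a) k + (if k = c then 1 else 0) = part xs k + (if k = a then 1 else 0)"
      using zs(2) unfolding box_transfer_def by blast
    then show ?thesis using eq[of k] by linarith
  qed
  then show "ys = move xs c a" using partition_eqI[OF ys zs(1)] by simp
  moreover have "ys \<noteq> xs" using eq[of a] \<open>c \<noteq> a\<close> by auto
  ultimately show "admissible xs c a"
    using corners(1,2) \<open>c \<noteq> a\<close> unfolding admissible_def by simp
qed

lemma last_row_with_part:
  assumes xs: "is_partition xs" and "1 \<le> i" "i \<le> length xs"
  obtains c where "removable xs c" "part xs c = part xs i" "\<And>k. part xs k = part xs i \<Longrightarrow> k \<le> c"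
proof -
  define R where "R = {k. part xs k = part xs i}"
  have "0 < part xs i" using part_pos_iff[OF xs] assms(2,3) by simp
  then have R_sub: "R \<subseteq> {1..length xs}" using part_pos_iff[OF xs] unfolding R_def by fastforce
  then have "finite R" by (rule finite_subset) simp
  moreover have "i \<in> R" unfolding R_def by simp
  ultimately obtain c where "c \<in> R" and last: "\<And>k. k \<in> R \<Longrightarrow> k \<le> c"
    using Max_in Max_ge by blast
  then have c1: "1 \<le> c" and cL: "c \<le> length xs" and pc: "part xs c = part xs i"
    using R_sub unfolding R_def by auto
  have "part xs (c + 1) \<le> part xs c" using part_antimono[OF xs c1, of "c + 1"] by simp
  moreover have "part xs (c + 1) \<noteq> part xs i" using last[of "c + 1"] unfolding R_def by auto
  ultimately have "removable xs c" using c1 cL pc unfolding removable_def by simp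
  then show ?thesis using that pc last unfolding R_def by simp
qed

lemma first_row_with_part:
  assumes xs: "is_partition xs" and "1 \<le> j" "j \<le> length xs + 1"
  obtains a where "addable xs a" "part xs a = part xs j" "\<And>k. 1 \<le> k \<Longrightarrow> part xs k = part xs j \<Longrightarrow> a \<le> k"
proof -
  define a where "a = (LEAST k. 1 \<le> k \<and> part xs k = part xs j)"
  have a1: "1 \<le> a" and pa: "part xs a = part xs j" and first: "\<And>k. 1 \<le> k \<Longrightarrow> part xs k = part xs j \<Longrightarrow> a \<le> k"
    using LeastI[of "\<lambda>k. 1 \<le> k \<and> part xs k = part xs j" j] Least_le[of "\<lambda>k. 1 \<le> k \<and> part xs k = part xs j"]
      assms(2) unfolding a_def by auto
  have "part xs a < part xs (a - 1)" if "a \<noteq> 1"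
  proof -
    have "part xs a \<le> part xs (a - 1)" using part_antimono[OF xs, of "a - 1" a] a1 that by simp
    moreover have "part xs (a - 1) \<noteq> part xs j" using first[of "a - 1"] a1 that by fastforce
    ultimately show ?thesis using pa by simp
  qed
  moreover have "a \<le> length xs + 1" using first[of j] assms(2,3) by simp
  ultimately have "addable xs a" using a1 unfolding addable_def by auto
  then show ?thesis using that pa first by blast
qed

text \<open>Since move only depends on the values of the two rows, the transfer can be taken from
  the last row with the value of row i to the first row with the value of row j; these rows
  are a removable and an addable corner.\<close>
lemma box_transfer_of_move:
  assumes xs: "is_partition xs" and "i \<noteq> j" "1 \<le> i" "i \<le> length xs" "1 \<le> j" "j \<le> length xs + 1"
    and moved: "move xs i j \<noteq> xs"
  obtains c a where "box_transfer xs c a (move xs i j)" "is_partition (move xs i j)"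
proof -
  obtain c where c: "removable xs c" "part xs c = part xs i" and last: "\<And>k. part xs k = part xs i \<Longrightarrow> k \<le> c"
    using last_row_with_part[OF xs assms(3,4)] by blast
  obtain a where a: "addable xs a" "part xs a = part xs j"
    and first: "\<And>k. 1 \<le> k \<Longrightarrow> part xs k = part xs j \<Longrightarrow> a \<le> k"
    using first_row_with_part[OF xs assms(5,6)] by blast
  have rows: "c \<in> {1..<length xs + 2}" "a \<in> {1..<length xs + 2}"
    using c(1) a(1) unfolding removable_def addable_def by auto
  have "c \<noteq> a"
  proof
    assume "c = a"
    then have "part xs i = part xs j" using a(2) c(2) by simp
    then have "i \<le> c" "j \<le> c" "a \<le> i" "a \<le> j" using last first assms(3,5) by auto
    then show False using \<open>c = a\<close> \<open>i \<noteq> j\<close> by simp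
  qed
  have same: "move xs i j = move xs c a"
    using move_cong_parts[OF \<open>i \<noteq> j\<close> \<open>c \<noteq> a\<close>] rows assms(3-6) a(2) c(2) by simp
  have "\<not> (a = c + 1 \<and> part xs c = part xs a + 1)"
    using move_eq_self[OF xs \<open>c \<noteq> a\<close> rows] moved same by auto
  then show ?thesis
    using that move_between_corners[OF xs c(1) a(1) \<open>c \<noteq> a\<close>] same by simp
qed

lemma adj_iff_box_transfer:
  assumes "is_partition xs"
  shows "adj xs ys \<longleftrightarrow> is_partition ys \<and> (\<exists>c a. box_transfer xs c a ys)"
proof
  assume "adj xs ys"
  then show "is_partition ys \<and> (\<exists>c a. box_transfer xs c a ys)"
    unfolding adj_def by (metis box_transfer_of_move[OF assms])
next
  assume "is_partition ys \<and> (\<exists>c a. box_transfer xs c a ys)"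
  then show "adj xs ys"
    using box_transfer_imp_admissible[OF assms]
    unfolding adj_def admissible_def removable_def addable_def by metis
qed

section \<open>Cliques of the partition graph\<close>

lemma box_transfer_sym: "box_transfer xs c a ys \<Longrightarrow> box_transfer ys a c xs"
  unfolding box_transfer_def by (metis (full_types))

lemma adj_sym:
  assumes "is_partition xs" "adj xs ys"
  shows "adj ys xs"
  using assms adj_iff_box_transfer box_transfer_sym by metis

lemma box_transfer_same_source:
  assumes "box_transfer xs c a1 ys1" "box_transfer xs c a2 ys2" "a1 \<noteq> a2"
  shows "box_transfer ys1 a1 a2 ys2"
  unfolding box_transfer_def
proof (intro conjI allI)
  fix k
  have "part ys1 k + (if k = c then 1 else 0) = part xs k + (if k = a1 then 1 else 0)"
    "part ys2 k + (if k = c then 1 else 0) = part xs k + (if k = a2 then 1 else 0)"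
    using assms(1,2) unfolding box_transfer_def by blast+
  then show "part ys2 k + (if k = a1 then 1 else 0) = part ys1 k + (if k = a2 then 1 else 0)"
    by (auto split: if_splits)
qed (use assms(3) in simp)

lemma box_transfer_same_target:
  assumes "box_transfer xs c1 a ys1" "box_transfer xs c2 a ys2" "c1 \<noteq> c2"
  shows "box_transfer ys1 c2 c1 ys2"
  unfolding box_transfer_def
proof (intro conjI allI)
  fix k
  have "part ys1 k + (if k = c1 then 1 else 0) = part xs k + (if k = a then 1 else 0)"
    "part ys2 k + (if k = c2 then 1 else 0) = part xs k + (if k = a then 1 else 0)"
    using assms(1,2) unfolding box_transfer_def by blast+
  then show "part ys2 k + (if k = c2 then 1 else 0) = part ys1 k + (if k = c1 then 1 else 0)"
    by (auto split: if_splits)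
qed (use assms(3) in simp)

text \<open>The part vector of ys2 - ys1 is e(c1) - e(a1) + e(a2) - e(c2); it has the shape
  e(a) - e(c) of a single transfer only if c1 = c2 or a1 = a2.\<close>
lemma box_transfer_triangle:
  assumes "box_transfer xs c1 a1 ys1" "box_transfer xs c2 a2 ys2" "box_transfer ys1 c a ys2"
  shows "c1 = c2 \<or> a1 = a2"
proof (rule ccontr)
  assume distinct: "\<not> (c1 = c2 \<or> a1 = a2)"
  have ne: "c1 \<noteq> a1" "c2 \<noteq> a2" "c \<noteq> a"
    and e1: "\<And>k. part ys1 k + (if k = c1 then 1 else 0) = part xs k + (if k = a1 then 1 else 0)"
    and e2: "\<And>k. part ys2 k + (if k = c2 then 1 else 0) = part xs k + (if k = a2 then 1 else 0)"
    and e: "\<And>k. part ys2 k + (if k = c then 1 else 0) = part ys1 k + (if k = a then 1 else 0)"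
    using assms unfolding box_transfer_def by auto
  have "a2 = a" "a2 \<noteq> c1"
    using e1[of a2] e2[of a2] e[of a2] distinct ne by (auto split: if_splits)
  moreover have "c1 = a"
    using e1[of c1] e2[of c1] e[of c1] distinct ne by (auto split: if_splits)
  ultimately show False by simp
qed

lemma pairwise_common_value:
  assumes "\<And>m m'. m \<in> N \<Longrightarrow> m' \<in> N \<Longrightarrow> m \<noteq> m' \<Longrightarrow> f m = f m' \<or> g m = g m'" "m0 \<in> N"
  shows "(\<forall>m\<in>N. f m = f m0) \<or> (\<forall>m\<in>N. g m = g m0)"
  using assms by metis

lemma pairwise_adj_insert_moves:
  assumes xs: "xs \<in> partitions n"
    and moves: "\<And>ys. ys \<in> Y \<Longrightarrow> \<exists>c a. admissible xs c a \<and> ys = move xs c a"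
    and transfers: "\<And>ys zs. ys \<in> Y \<Longrightarrow> zs \<in> Y \<Longrightarrow> ys \<noteq> zs \<Longrightarrow> \<exists>c a. box_transfer ys c a zs"
  shows "insert xs Y \<subseteq> partitions n" and "pairwise adj (insert xs Y)"
proof -
  have xs_part: "is_partition xs" using xs partitions_iff by blast
  have Y: "Y \<subseteq> partitions n" using moves move_in_partitions[OF xs] by blast
  then show "insert xs Y \<subseteq> partitions n" using xs by blast
  have Y_part: "is_partition ys" if "ys \<in> Y" for ys using Y that partitions_iff by blast
  have "adj xs ys" if "ys \<in> Y" for ys
    using moves[OF that] admissible_move[OF xs_part] adj_iff_box_transfer[OF xs_part] by blast
  moreover have "pairwise adj Y"
    unfolding pairwise_def using transfers Y_part adj_iff_box_transfer by blast
  ultimately show "pairwise adj (insert xs Y)"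
    using adj_sym[OF xs_part] by (auto simp: pairwise_insert)
qed

lemma star_max_clique:
  assumes "xs \<in> partitions n"
  shows "star_max xs c \<subseteq> partitions n" and "pairwise adj (star_max xs c)"
proof -
  have "is_partition xs" using assms partitions_iff by blast
  let ?Y = "move xs c ` A_max xs c"
  have "\<exists>c' a. admissible xs c' a \<and> ys = move xs c' a" if "ys \<in> ?Y" for ys
    using that unfolding A_max_def by blast
  moreover have "\<exists>c' a'. box_transfer ys c' a' zs" if "ys \<in> ?Y" "zs \<in> ?Y" "ys \<noteq> zs" for ys zs
    using that box_transfer_same_source admissible_move(2)[OF \<open>is_partition xs\<close>]
    unfolding A_max_def by blast
  ultimately show "star_max xs c \<subseteq> partitions n" "pairwise adj (star_max xs c)"
    unfolding star_max_def using pairwise_adj_insert_moves[OF assms, of ?Y] by blast+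
qed

lemma top_max_clique:
  assumes "xs \<in> partitions n"
  shows "top_max xs a \<subseteq> partitions n" and "pairwise adj (top_max xs a)"
proof -
  have "is_partition xs" using assms partitions_iff by blast
  let ?Y = "(\<lambda>c. move xs c a) ` C_max xs a"
  have "\<exists>c a'. admissible xs c a' \<and> ys = move xs c a'" if "ys \<in> ?Y" for ys
    using that unfolding C_max_def by blast
  moreover have "\<exists>c' a'. box_transfer ys c' a' zs" if "ys \<in> ?Y" "zs \<in> ?Y" "ys \<noteq> zs" for ys zs
    using that box_transfer_same_target admissible_move(2)[OF \<open>is_partition xs\<close>]
    unfolding C_max_def by blast
  ultimately show "top_max xs a \<subseteq> partitions n" "pairwise adj (top_max xs a)"
    unfolding top_max_def using pairwise_adj_insert_moves[OF assms, of ?Y] by blast+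
qed

lemma C_clique:
  assumes "f \<in> C n"
  shows "f \<subseteq> partitions n" and "pairwise adj f"
  using assms star_max_clique top_max_clique unfolding C_def by blast+

lemma clique_neighbours_as_transfers:
  assumes s: "s \<subseteq> partitions n" "pairwise adj s" and "l \<in> s"
  obtains src tgt where
    "\<And>m. m \<in> s - {l} \<Longrightarrow> admissible l (src m) (tgt m)"
    "\<And>m. m \<in> s - {l} \<Longrightarrow> m = move l (src m) (tgt m)"
    "\<And>m m'. m \<in> s - {l} \<Longrightarrow> m' \<in> s - {l} \<Longrightarrow> m \<noteq> m' \<Longrightarrow> src m = src m' \<or> tgt m = tgt m'"
proof -
  have l: "is_partition l" using assms partitions_iff by auto
  have s_part: "is_partition m" if "m \<in> s" for m
    using partitions_iff[THEN iffD1, OF subsetD[OF s(1) that]] by blast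
  let ?N = "s - {l}"
  have "\<exists>c a. box_transfer l c a m" if "m \<in> ?N" for m
  proof -
    have "adj l m" using pairwiseD[OF s(2) \<open>l \<in> s\<close>] that by blast
    then show ?thesis unfolding adj_iff_box_transfer[OF l] by blast
  qed
  then obtain src tgt where tr: "\<And>m. m \<in> ?N \<Longrightarrow> box_transfer l (src m) (tgt m) m"
    by metis
  have adm: "admissible l (src m) (tgt m)" "m = move l (src m) (tgt m)" if "m \<in> ?N" for m
  proof -
    have "is_partition m" using s_part that by blast
    from box_transfer_imp_admissible[OF l this tr[OF that]]
    show "admissible l (src m) (tgt m)" "m = move l (src m) (tgt m)" .
  qed
  have shared: "src m = src m' \<or> tgt m = tgt m'" if "m \<in> ?N" "m' \<in> ?N" "m \<noteq> m'" for m m'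
  proof -
    have "adj m m'" using pairwiseD[OF s(2)] that by blast
    moreover have "is_partition m" using s_part that by blast
    ultimately obtain c a where "box_transfer m c a m'"
      using adj_iff_box_transfer by blast
    then show ?thesis using box_transfer_triangle[OF tr[OF that(1)] tr[OF that(2)]] by blast
  qed
  show ?thesis by (rule that[OF adm(1) adm(2) shared])
qed

lemma clique_subset_C:
  assumes s: "s \<subseteq> partitions n" "pairwise adj s" and l: "l \<in> s"
  shows "\<exists>f\<in>C n. s \<subseteq> f"
proof -
  let ?N = "s - {l}"
  obtain src tgt where adm: "\<And>m. m \<in> ?N \<Longrightarrow> admissible l (src m) (tgt m)"
    and mv: "\<And>m. m \<in> ?N \<Longrightarrow> m = move l (src m) (tgt m)"
    and shared: "\<And>m m'. m \<in> ?N \<Longrightarrow> m' \<in> ?N \<Longrightarrow> m \<noteq> m' \<Longrightarrow> src m = src m' \<or> tgt m = tgt m'"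
    using clique_neighbours_as_transfers[OF s l] by blast
  have "l \<in> partitions n" using s(1) l by blast
  show ?thesis
  proof (cases "?N = {}")
    case True
    then have "s \<subseteq> top_max l 1" unfolding top_max_def by blast
    moreover have "addable l 1" unfolding addable_def by simp
    ultimately show ?thesis using \<open>l \<in> partitions n\<close> unfolding C_def by blast
  next
    case False
    then obtain m0 where m0: "m0 \<in> ?N" by blast
    consider "\<forall>m\<in>?N. src m = src m0" | "\<forall>m\<in>?N. tgt m = tgt m0"
      using pairwise_common_value[where f = src and g = tgt, OF shared m0] by blast
    then show ?thesis
    proof cases
      case 1
      have "m \<in> star_max l (src m0)" if "m \<in> ?N" for m
        using adm[OF that] mv[OF that] 1 that unfolding star_max_def A_max_def by auto
      then have "s \<subseteq> star_max l (src m0)" unfolding star_max_def by blast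
      moreover have "removable l (src m0)" using adm[OF m0] unfolding admissible_def by blast
      ultimately show ?thesis using \<open>l \<in> partitions n\<close> unfolding C_def by blast
    next
      case 2
      have "m \<in> top_max l (tgt m0)" if "m \<in> ?N" for m
        using adm[OF that] mv[OF that] 2 that unfolding top_max_def C_max_def by auto
      then have "s \<subseteq> top_max l (tgt m0)" unfolding top_max_def by blast
      moreover have "addable l (tgt m0)" using adm[OF m0] unfolding admissible_def by blast
      ultimately show ?thesis using \<open>l \<in> partitions n\<close> unfolding C_def by blast
    qed
  qed
qed

lemma length_le_sum_list: "0 \<notin> set xs \<Longrightarrow> length xs \<le> sum_list (xs :: nat list)"
  by (induction xs) force+

lemma finite_partitions: "finite (partitions n)"
proof (rule finite_subset)
  show "partitions n \<subseteq> {xs. set xs \<subseteq> {0..n} \<and> length xs \<le> n}"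
    unfolding partitions_def using length_le_sum_list member_le_sum_list by fastforce
  show "finite {xs. set xs \<subseteq> {0..n} \<and> length xs \<le> n}"
    by (rule finite_lists_length_le) simp
qed

lemma K_eq_generated_complex: "K n = generated_complex (C n)"
proof
  show "K n \<subseteq> generated_complex (C n)"
  proof
    fix s assume "s \<in> K n"
    then have "s \<noteq> {}" "s \<subseteq> partitions n" "pairwise adj s" unfolding K_def pairwise_def by auto
    then obtain f where "f \<in> C n" "s \<subseteq> f" using clique_subset_C by blast
    then show "s \<in> generated_complex (C n)" using \<open>s \<noteq> {}\<close> unfolding generated_complex_def by blast
  qed
  show "generated_complex (C n) \<subseteq> K n"
  proof
    fix s assume "s \<in> generated_complex (C n)"
    then obtain f where "f \<in> C n" "s \<subseteq> f" "s \<noteq> {}" unfolding generated_complex_def by blast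
    moreover have "finite s" using C_clique(1)[OF \<open>f \<in> C n\<close>] \<open>s \<subseteq> f\<close> finite_partitions
      by (metis finite_subset)
    ultimately show "s \<in> K n"
      using C_clique[OF \<open>f \<in> C n\<close>] pairwise_subset[of adj f s] unfolding K_def pairwise_def by blast
  qed
qed

theorem proposition3p2:
  fixes n :: nat
  assumes "n \<ge> 1"
  shows "euler_char (K n) = euler_char (nerve (C n))"
proof -
  have "C n \<subseteq> Pow (partitions n)" using C_clique(1) by blast
  then have "finite (C n)" using finite_partitions by (simp add: finite_subset)
  moreover have "finite f" if "f \<in> C n" for f
    using C_clique(1)[OF that] finite_partitions by (rule finite_subset)
  ultimately show ?thesis
    unfolding K_eq_generated_complex by (rule euler_char_generated_complex_eq_nerve)
qed

end
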